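(* Let $\langle T,\le\rangle$ be a temporal flow and $v$ a temporal assignment over variables on $T$ (extended to formulas pointwise as in the context). Then for every formula $\varphi$, the function $v(\varphi,\cdot)$ is admissible and $s^v(\varphi)=d(v(\varphi,\cdot))$.
   Context: A temporal flow is a totally ordered infinite set $\langle T,\le\rangle$. On $\{0,\frac12,1\}$ put $\neg_3x=1-x$, $x\to_3y=\min(1,1-x+y)$. A function $f:T\to\{0,\frac12,1\}$ is admissible if it is constant, or there exist $i\in\{0,1\}$ and $t\in T$ (not the minimum of $T$, if $T$ has one) with $f(t')=i$ for all $t'\ge t$ and $f(t'')=\frac12$ for all $t''<t$. Let $T'=T\cup\{-\infty\}$; for admissible $f$ define $d(f)=\langle-\infty,c\rangle$ if $f$ is constant with value $c$, and $d(f)=\langle t,i\rangle$ in the second case. Let $T''=(T'\times\{0,1\})\cup\{\langle-\infty,\frac12\rangle\}$, totally ordered by: for $t<t'$ in $T$, $\langle-\infty,0\rangle<\langle t,0\rangle<\langle t',0\rangle<\langle-\infty,\frac12\rangle<\langle t',1\rangle<\langle t,1\rangle<\langle-\infty,1\rangle$. Formulas are built from variables and $\bot$ using $\neg$ and $\to$. A temporal assignment over variables is $v:VAR\times T\to\{0,\frac12,1\}$ with each $v(x,\cdot)$ admissible; it is extended to formulas by $v(\bot,t)=0$, $v(\neg\psi,t)=\neg_3v(\psi,t)$, and $v(\psi\to\chi,t)=v(\psi,t)\to_3v(\chi,t)$ if this equals $v(\psi,t')\to_3v(\chi,t')$ for every $t'\ge t$, and $\frac12$ otherwise. The map $s^v$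 from formulas to $T''$: $s^v(x)=d(v(x,\cdot))$; $s^v(\bot)=\langle-\infty,0\rangle$; if $s^v(\varphi)=\langle a,m\rangle$ then $s^v(\neg\varphi)=\langle a,1-m\rangle$; $s^v(\varphi\to\psi)=\langle-\infty,1\rangle$ if $s^v(\varphi)\le s^v(\psi)$ in $T''$, otherwise the maximum in $T''$ of $s^v(\neg\varphi)$ and $s^v(\psi)$. *)

theory Defs
  imports Main "HOL.Real"
begin

text \<open>Truth values are the reals 0, 1/2, 1; the flow T is a linearly ordered type 'a.\<close>

definition neg3 :: "real \<Rightarrow> real" where
  "neg3 x = 1 - x"

definition imp3 :: "real \<Rightarrow> real \<Rightarrow> real" where
  "imp3 x y = min 1 (1 - x + y)"

definition admissible :: "('a::linorder \<Rightarrow> real) \<Rightarrow> bool" where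
  "admissible f \<longleftrightarrow>
     (\<forall>t. f t \<in> {0, 1/2, 1}) \<and>
     ((\<exists>c. \<forall>t. f t = c) \<or>
      (\<exists>i\<in>{0,1}. \<exists>t. (\<exists>t0. t0 < t) \<and> (\<forall>t'. t' \<ge> t \<longrightarrow> f t' = i)
                         \<and> (\<forall>t''. t'' < t \<longrightarrow> f t'' = 1/2)))"

text \<open>Elements of T'' are pairs (a, m) with a in T' = T + {-infinity} (None = -infinity)
  and m in {0,1}, plus (None, 1/2).\<close>

definition d :: "('a::linorder \<Rightarrow> real) \<Rightarrow> 'a option \<times> real" where
  "d f = (if \<exists>c. \<forall>t. f t = c then (None, THE c. \<forall>t. f t = c)
          else (THE p. \<exists>t i. p = (Some t, i) \<and> i \<in> {0,1} \<and> (\<exists>t0. t0 < t)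
                   \<and> (\<forall>t'. t' \<ge> t \<longrightarrow> f t' = i) \<and> (\<forall>t''. t'' < t \<longrightarrow> f t'' = 1/2)))"

fun less_opt :: "'a::linorder option \<Rightarrow> 'a option \<Rightarrow> bool" where
  "less_opt None None = False"
| "less_opt None (Some _) = True"
| "less_opt (Some _) None = False"
| "less_opt (Some t) (Some t') = (t < t')"

text \<open>Order on T'': (-inf,0) < (t,0) < (t',0) < (-inf,1/2) < (t',1) < (t,1) < (-inf,1) for t < t'.\<close>

definition less2 :: "'a::linorder option \<times> real \<Rightarrow> 'a option \<times> real \<Rightarrow> bool" where
  "less2 p q = (case p of (a, m) \<Rightarrow> case q of (b, n) \<Rightarrow>
      m < n \<or> (m = n \<and> m = 0 \<and> less_opt a b) \<or> (m = n \<and> m = 1 \<and> less_opt b a))"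

definition le2 :: "'a::linorder option \<times> real \<Rightarrow> 'a option \<times> real \<Rightarrow> bool" where
  "le2 p q \<longleftrightarrow> less2 p q \<or> p = q"

definition max2 :: "'a::linorder option \<times> real \<Rightarrow> 'a option \<times> real \<Rightarrow> 'a option \<times> real" where
  "max2 p q = (if le2 p q then q else p)"

datatype 'v form = Var 'v | Bot | Neg "'v form" | Imp "'v form" "'v form"

fun eval :: "('v \<Rightarrow> 'a::linorder \<Rightarrow> real) \<Rightarrow> 'v form \<Rightarrow> 'a \<Rightarrow> real" where
  "eval v (Var x) t = v x t"
| "eval v Bot t = 0"
| "eval v (Neg p) t = neg3 (eval v p t)"
| "eval v (Imp p q) t =
     (if \<forall>t'. t' \<ge> t \<longrightarrow> imp3 (eval v p t') (eval v q t') = imp3 (eval v p t) (eval v q t)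
      then imp3 (eval v p t) (eval v q t) else 1/2)"

definition negT2 :: "'a option \<times> real \<Rightarrow> 'a option \<times> real" where
  "negT2 p = (case p of (a, m) \<Rightarrow> (a, 1 - m))"

fun sv :: "('v \<Rightarrow> 'a::linorder \<Rightarrow> real) \<Rightarrow> 'v form \<Rightarrow> 'a option \<times> real" where
  "sv v (Var x) = d (v x)"
| "sv v Bot = (None, 0)"
| "sv v (Neg p) = negT2 (sv v p)"
| "sv v (Imp p q) = (if le2 (sv v p) (sv v q) then (None, 1) else max2 (negT2 (sv v p)) (sv v q))"

end

theory Submission imports Defs begin

text \<open>A point of T'' encodes a step function on T: (-\<infinity>, c) the constant c, and (t, i) the
  function that is 1/2 before t and i from t on. Negation in T'' is pointwise negation of the encodings, the
  order of T'' is their pointwise order (so any two encodings are pointwise comparable), and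
  the maximum in T'' is the pointwise maximum. Hence, by induction on the formula, it suffices
  to see that the temporal implication of two encodings f, g with g \<le> f, g \<noteq> f is pointwise
  max(1 - f, g). The only delicate instant is one where both are 1/2: there the later
  disagreement of f and g makes the implication unstable, so it is 1/2 as well.\<close>

fun fun_of_point :: "'a::linorder option \<times> real \<Rightarrow> 'a \<Rightarrow> real" where
  "fun_of_point (None, c) = (\<lambda>t. c)"
| "fun_of_point (Some s, i) = (\<lambda>t. if t < s then 1/2 else i)"

fun valid_point :: "'a::linorder option \<times> real \<Rightarrow> bool" where
  "valid_point (None, c) \<longleftrightarrow> c \<in> {0, 1/2, 1}"
| "valid_point (Some s, i) \<longleftrightarrow> i \<in> {0, 1} \<and> (\<exists>t0. t0 < s)"

definition temporal_imp :: "('a::linorder \<Rightarrow> real) \<Rightarrow> ('a \<Rightarrow> real) \<Rightarrow> 'a \<Rightarrow> real" where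
  "temporal_imp f g t =
     (if \<forall>t'. t' \<ge> t \<longrightarrow> imp3 (f t') (g t') = imp3 (f t) (g t) then imp3 (f t) (g t) else 1/2)"

lemma eval_Imp: "eval v (Imp \<phi> \<psi>) = temporal_imp (eval v \<phi>) (eval v \<psi>)"
  by (simp add: fun_eq_iff temporal_imp_def)

lemma admissible_fun_of_point: "valid_point p \<Longrightarrow> admissible (fun_of_point p)"
  by (cases p rule: valid_point.cases) (auto simp: admissible_def)

lemma admissible_imp_fun_of_point:
  assumes "admissible f"
  obtains p where "valid_point p" "f = fun_of_point p"
proof -
  from assms consider c where "\<forall>t. f t = c" "\<forall>t. f t \<in> {0, 1/2, 1}"
    | i t where "i \<in> {0, 1}" "\<exists>t0. t0 < t" "\<forall>t'. t' \<ge> t \<longrightarrow> f t' = i"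
        "\<forall>t''. t'' < t \<longrightarrow> f t'' = 1/2"
    unfolding admissible_def by blast
  then show thesis
  proof cases
    case 1
    then show thesis by (intro that[of "(None, c)"]) auto
  next
    case 2
    then show thesis by (intro that[of "(Some t, i)"]) (auto simp: fun_eq_iff not_less)
  qed
qed

lemma d_fun_of_point:
  assumes "valid_point p"
  shows "d (fun_of_point p) = p"
proof (cases p rule: valid_point.cases)
  case (1 c)
  then show ?thesis by (simp add: d_def)
next
  case (2 s i)
  with assms obtain t0 where t0: "t0 < s" and i: "i \<in> {0, 1}" by auto
  have not_const: "\<not> (\<exists>c. \<forall>t. fun_of_point p t = c)"
  proof
    assume "\<exists>c. \<forall>t. fun_of_point p t = c"
    then obtain c where "\<forall>t. fun_of_point p t = c" by blast
    from this[rule_format, of t0] this[rule_format, of s] t0 i 2 show False by auto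
  qed
  have "(THE q. \<exists>t j. q = (Some t, j) \<and> j \<in> {0, 1} \<and> (\<exists>t0. t0 < t)
           \<and> (\<forall>t'. t' \<ge> t \<longrightarrow> fun_of_point p t' = j)
           \<and> (\<forall>t''. t'' < t \<longrightarrow> fun_of_point p t'' = 1/2)) = p"
  proof (rule the_equality)
    fix q
    assume "\<exists>t j. q = (Some t, j) \<and> j \<in> {0, 1} \<and> (\<exists>t0. t0 < t)
           \<and> (\<forall>t'. t' \<ge> t \<longrightarrow> fun_of_point p t' = j)
           \<and> (\<forall>t''. t'' < t \<longrightarrow> fun_of_point p t'' = 1/2)"
    then obtain t j where q: "q = (Some t, j)" "j \<in> {0, 1}"
      and after: "\<forall>t'. t' \<ge> t \<longrightarrow> fun_of_point p t' = j"
      and before: "\<forall>t''. t'' < t \<longrightarrow> fun_of_point p t'' = 1/2" by blast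
    have "\<not> s < t" using before[rule_format, of s] 2 i by auto
    moreover have "\<not> t < s" using after[rule_format, of t] 2 q(2) by auto
    ultimately have "s = t" by auto
    then show "q = p" using after[rule_format, of t] 2 q by auto
  qed (use 2 t0 i in auto)
  then show ?thesis unfolding d_def by (subst if_not_P[OF not_const])
qed

lemma fun_of_point_range: "valid_point p \<Longrightarrow> fun_of_point p t \<in> {0, 1/2, 1}"
  by (cases p rule: valid_point.cases) auto

lemma fun_of_point_stable_after:
  "valid_point p \<Longrightarrow> fun_of_point p t \<noteq> 1/2 \<Longrightarrow> t \<le> t' \<Longrightarrow> fun_of_point p t' = fun_of_point p t"
  by (cases p rule: valid_point.cases) auto

lemma fun_of_point_half_before:
  "valid_point p \<Longrightarrow> fun_of_point p t = 1/2 \<Longrightarrow> t' \<le> t \<Longrightarrow> fun_of_point p t' = 1/2"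
  by (cases p rule: valid_point.cases) (auto split: if_splits)

lemma valid_point_negT2: "valid_point p \<Longrightarrow> valid_point (negT2 p)"
  by (cases p rule: valid_point.cases) (auto simp: negT2_def)

lemma fun_of_point_negT2: "fun_of_point (negT2 p) = (\<lambda>t. neg3 (fun_of_point p t))"
  by (cases p rule: valid_point.cases) (auto simp: negT2_def neg3_def fun_eq_iff)

lemma le2_iff_pointwise_le:
  "valid_point p \<Longrightarrow> valid_point q \<Longrightarrow> le2 p q \<longleftrightarrow> (\<forall>t. fun_of_point p t \<le> fun_of_point q t)"
proof (cases p rule: valid_point.cases; cases q rule: valid_point.cases)
  fix s i s' j
  assume "p = (Some s, i)" "q = (Some s', j)" "valid_point p" "valid_point q"
  then show ?thesis
    by (auto simp: le2_def less2_def; metis less_irrefl linorder_neqE)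
qed (auto simp: le2_def less2_def)

lemma le2_total: "valid_point p \<Longrightarrow> valid_point q \<Longrightarrow> le2 p q \<or> le2 q p"
  by (cases p rule: valid_point.cases; cases q rule: valid_point.cases)
     (auto simp: le2_def less2_def)

lemma valid_point_max2: "valid_point p \<Longrightarrow> valid_point q \<Longrightarrow> valid_point (max2 p q)"
  by (simp add: max2_def)

lemma fun_of_point_max2:
  assumes "valid_point p" "valid_point q"
  shows "fun_of_point (max2 p q) = (\<lambda>t. max (fun_of_point p t) (fun_of_point q t))"
proof (cases "le2 p q")
  case True
  then show ?thesis using le2_iff_pointwise_le[OF assms] by (simp add: max2_def fun_eq_iff max_def)
next
  case False
  then have "\<forall>t. fun_of_point q t \<le> fun_of_point p t"
    using le2_total[OF assms] le2_iff_pointwise_le[OF assms(2,1)] by blast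
  then show ?thesis using False by (simp add: max2_def fun_eq_iff max_absorb1)
qed

lemma temporal_imp_pointwise_le:
  "(\<forall>t. f t \<le> g t) \<Longrightarrow> temporal_imp f g = (\<lambda>t. 1)"
  by (simp add: temporal_imp_def imp3_def fun_eq_iff)

lemma temporal_imp_eq_max:
  assumes p: "valid_point p" and q: "valid_point q"
    and le: "\<forall>t. fun_of_point q t \<le> fun_of_point p t"
    and ne: "fun_of_point p t0 \<noteq> fun_of_point q t0"
  shows "temporal_imp (fun_of_point p) (fun_of_point q) t
           = max (1 - fun_of_point p t) (fun_of_point q t)"
proof -
  let ?f = "fun_of_point p" and ?g = "fun_of_point q"
  have range: "?f t \<in> {0, 1/2, 1}" "?g t \<in> {0, 1/2, 1}"
    using fun_of_point_range p q by blast+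
  consider "?f t = 1/2" "?g t = 1/2" | "imp3 (?f t) (?g t) = 1/2" "max (1 - ?f t) (?g t) = 1/2"
    | "?f t \<noteq> 1/2" "?g t \<noteq> 1/2"
    using range le[rule_format, of t] by (auto simp: imp3_def)
  then show ?thesis
  proof cases
    case 1
    have "t < t0"
    proof (rule ccontr)
      assume "\<not> t < t0"
      then have "t0 \<le> t" by simp
      then have "?f t0 = 1/2" "?g t0 = 1/2"
        by (rule fun_of_point_half_before[OF p 1(1)], rule fun_of_point_half_before[OF q 1(2)])
      with ne show False by simp
    qed
    have "?g t0 < ?f t0" using le[rule_format, of t0] ne by linarith
    then have "imp3 (?f t0) (?g t0) < 1" by (simp add: imp3_def)
    moreover have "imp3 (?f t) (?g t) = 1" using 1 by (simp add: imp3_def)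
    ultimately have "\<not> (\<forall>t'\<ge>t. imp3 (?f t') (?g t') = imp3 (?f t) (?g t))"
      using \<open>t < t0\<close> by (auto intro!: exI[of _ t0])
    then have "temporal_imp ?f ?g t = 1/2" unfolding temporal_imp_def by (rule if_not_P)
    also have "\<dots> = max (1 - ?f t) (?g t)" unfolding 1 by simp
    finally show ?thesis .
  next
    case 2
    show ?thesis unfolding temporal_imp_def 2 by simp
  next
    case 3
    have "imp3 (?f t') (?g t') = imp3 (?f t) (?g t)" if "t \<le> t'" for t'
      using fun_of_point_stable_after[OF p 3(1) that] fun_of_point_stable_after[OF q 3(2) that]
      by (simp only:)
    then have "temporal_imp ?f ?g t = imp3 (?f t) (?g t)"
      unfolding temporal_imp_def by (intro if_P allI impI)
    also have "\<dots> = max (1 - ?f t) (?g t)"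
      using range le[rule_format, of t] 3 by (auto simp: imp3_def)
    finally show ?thesis .
  qed
qed

lemma eval_eq_fun_of_point_sv:
  assumes "\<forall>x. admissible (v x)"
  shows "valid_point (sv v \<phi>) \<and> eval v \<phi> = fun_of_point (sv v \<phi>)"
proof (induction \<phi>)
  case (Var x)
  obtain p where "valid_point p" "v x = fun_of_point p"
    using admissible_imp_fun_of_point assms by blast
  then show ?case using d_fun_of_point[OF \<open>valid_point p\<close>] by simp
next
  case Bot
  then show ?case by (simp add: fun_eq_iff)
next
  case (Neg \<phi>)
  then show ?case by (simp add: valid_point_negT2 fun_of_point_negT2 fun_eq_iff)
next
  case (Imp \<phi> \<psi>)
  define p q where "p = sv v \<phi>" and "q = sv v \<psi>"
  have p: "valid_point p" "eval v \<phi> = fun_of_point p"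
    and q: "valid_point q" "eval v \<psi> = fun_of_point q"
    using Imp by (auto simp: p_def q_def)
  show ?case
  proof (cases "le2 p q")
    case True
    then show ?thesis
      using le2_iff_pointwise_le[OF p(1) q(1)] temporal_imp_pointwise_le
      by (simp add: p_def q_def eval_Imp p(2) q(2))
  next
    case False
    then obtain t0 where "\<not> fun_of_point p t0 \<le> fun_of_point q t0"
      using le2_iff_pointwise_le[OF p(1) q(1)] by blast
    then have ne: "fun_of_point p t0 \<noteq> fun_of_point q t0" by auto
    have le: "\<forall>t. fun_of_point q t \<le> fun_of_point p t"
      using False le2_total[OF p(1) q(1)] le2_iff_pointwise_le[OF q(1) p(1)] by blast
    have neg: "valid_point (negT2 p)" using p(1) by (rule valid_point_negT2)
    have "eval v (Imp \<phi> \<psi>) = (\<lambda>t. max (1 - fun_of_point p t) (fun_of_point q t))"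
      unfolding eval_Imp p(2) q(2) by (intro ext temporal_imp_eq_max[OF p(1) q(1) le ne])
    also have "\<dots> = fun_of_point (max2 (negT2 p) q)"
      by (simp add: fun_of_point_max2[OF neg q(1)] fun_of_point_negT2 neg3_def)
    also have "max2 (negT2 p) q = sv v (Imp \<phi> \<psi>)"
      using False by (simp add: p_def q_def)
    finally show ?thesis
      using valid_point_max2[OF neg q(1)] False by (simp add: p_def q_def)
  qed
qed

theorem mainTheorem4:
  fixes v :: "'v \<Rightarrow> 'a::linorder \<Rightarrow> real" and \<phi> :: "'v form"
  assumes "infinite (UNIV :: 'a set)"
    and "\<forall>x. admissible (v x)"
  shows "admissible (eval v \<phi>) \<and> sv v \<phi> = d (eval v \<phi>)"
  using eval_eq_fun_of_point_sv[OF assms(2), of \<phi>] admissible_fun_of_point d_fun_of_point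
  by metis

end
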